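(* Let $X,Y$ be real Hilbert spaces and $I$ either $[0,T]$ ($T>0$) or $[0,+\infty)$. Assume: $K\subset X$ is a nonempty closed convex cone; $A:X\to X$ satisfies $(Au-Av,u-v)_X\ge m_A\|u-v\|_X^2$ and $\|Au-Av\|_X\le L_A\|u-v\|_X$ for all $u,v\in X$, with $m_A,L_A>0$; $j:Y\times K\to\mathbb{R}$ is such that $j(\eta,\cdot)$ is convex, positively homogeneous and Lipschitz continuous on $K$ for every $\eta\in Y$, and there is $\alpha_j\ge0$ with $j(\eta_1,v_2)-j(\eta_1,v_1)+j(\eta_2,v_1)-j(\eta_2,v_2)\le\alpha_j\|\eta_1-\eta_2\|_Y\|v_1-v_2\|_X$ for all $\eta_i\in Y$, $v_i\in K$; $f\in C(I;X)$; and $\mathcal{R}:C(I;X)\to C(I;Y)$ and $\mathcal{S}:C(I;X)\to C(I;X)$ are history-dependent operators. Then there exists a unique function $u:I\to X$ such that $$-u(t)\in \mathrm{N}_{C(\mathcal{R}u(t),t)}\big(Au(t)+\mathcal{S}u(t)\big)\quad\forall\,t\in I,$$ and it satisfies $u\in C(I;K)$.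
   Context: An operator $\mathcal{P}:C(I;Z_1)\to C(I;Z_2)$ between spaces of continuous functions with values in normed spaces $Z_1,Z_2$ is history-dependent if for every compact $\mathcal J\subset I$ there is $L_{\mathcal J}>0$ with $\|\mathcal{P}u_1(t)-\mathcal{P}u_2(t)\|_{Z_2}\le L_{\mathcal J}\int_0^t\|u_1(s)-u_2(s)\|_{Z_1}ds$ for all $u_1,u_2\in C(I;Z_1)$, $t\in\mathcal J$. Define $J(\eta,v)=j(\eta,v)$ for $v\in K$, $J(\eta,v)=+\infty$ for $v\notin K$; $C(\eta)=\{\xi\in X: J(\eta,v)\ge(\xi,v)_X\ \forall v\in X\}$; $C(\eta,t)=f(t)-C(\eta)$. For a nonempty closed convex $D\subset X$, $\mathrm{N}_D(x)=\{\xi:(\xi,w-x)_X\le0\ \forall w\in D\}$ if $x\in D$, $\emptyset$ otherwise. *)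

theory Defs
  imports "HOL-Analysis.Analysis"
begin

definition maps_continuous :: "real set \<Rightarrow> ((real \<Rightarrow> 'a::real_normed_vector) \<Rightarrow> (real \<Rightarrow> 'b::real_normed_vector)) \<Rightarrow> bool" where
  "maps_continuous I P \<longleftrightarrow> (\<forall>u. continuous_on I u \<longrightarrow> continuous_on I (P u))"

definition history_dependent :: "real set \<Rightarrow> ((real \<Rightarrow> 'a::real_normed_vector) \<Rightarrow> (real \<Rightarrow> 'b::real_normed_vector)) \<Rightarrow> bool" where
  "history_dependent I P \<longleftrightarrow>
     (\<forall>J. compact J \<and> J \<subseteq> I \<longrightarrow>
        (\<exists>L>0. \<forall>u1 u2. continuous_on I u1 \<and> continuous_on I u2 \<longrightarrow>
            (\<forall>t\<in>J. norm (P u1 t - P u2 t) \<le> L * integral {0..t} (\<lambda>s. norm (u1 s - u2 s)))))"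

definition Jext :: "('b \<Rightarrow> 'a \<Rightarrow> real) \<Rightarrow> 'a set \<Rightarrow> 'b \<Rightarrow> 'a \<Rightarrow> ereal" where
  "Jext j K \<eta> v = (if v \<in> K then ereal (j \<eta> v) else \<infinity>)"

definition Cset :: "('b \<Rightarrow> 'a::real_inner \<Rightarrow> real) \<Rightarrow> 'a set \<Rightarrow> 'b \<Rightarrow> 'a set" where
  "Cset j K \<eta> = {\<xi>. \<forall>v. Jext j K \<eta> v \<ge> ereal (\<xi> \<bullet> v)}"

definition Cset_t :: "('b \<Rightarrow> 'a::real_inner \<Rightarrow> real) \<Rightarrow> 'a set \<Rightarrow> (real \<Rightarrow> 'a) \<Rightarrow> 'b \<Rightarrow> real \<Rightarrow> 'a set" where
  "Cset_t j K f \<eta> t = (\<lambda>\<xi>. f t - \<xi>) ` Cset j K \<eta>"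

definition normal_cone :: "'a::real_inner set \<Rightarrow> 'a \<Rightarrow> 'a set" where
  "normal_cone D x = (if x \<in> D then {\<xi>. \<forall>w\<in>D. \<xi> \<bullet> (w - x) \<le> 0} else {})"

end

theory Submission
  imports Defs
begin

text \<open>
  For fixed \<open>\<eta>\<close>, \<open>C(\<eta>)\<close> is the set of linear minorants of the sublinear
  functional \<open>j(\<eta>,\<cdot>)\<close> on the cone \<open>K\<close>, and conversely \<open>j(\<eta>,\<cdot>)\<close> is the
  support function of \<open>C(\<eta>)\<close> on \<open>K\<close> (separate a point below the epigraph, a closed
  convex cone, from it). Consequently \<open>-u \<in> N(f(t) - C(\<eta>), Au + s)\<close> says exactly
  that \<open>u\<close> solves the variational inequality \<open>u \<in> K\<close>,
  \<open>(f(t) - s - Au, v - u) \<le> j(\<eta>,v) - j(\<eta>,u)\<close> for all \<open>v \<in> K\<close>.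

  For frozen \<open>\<eta>\<close> and \<open>g = f(t) - s\<close> that inequality has a unique solution
  \<open>sol(\<eta>,g)\<close>: the fixed point of the contraction \<open>z \<mapsto> prox(z - \<rho>(Az - g))\<close>,
  where the proximal map of \<open>\<rho> j(\<eta>,\<cdot>)\<close> on \<open>K\<close> is obtained by minimising a
  strongly convex functional. Strong monotonicity of \<open>A\<close> and the hypothesis on
  \<open>\<alpha>\<^sub>j\<close> make \<open>sol\<close> Lipschitz in \<open>(\<eta>,g)\<close>. The problem becomes \<open>u = \<Lambda> u\<close>
  with \<open>\<Lambda> u(t) = sol(R u(t), f(t) - S u(t))\<close>, a history-dependent operator, whose
  Picard iterates converge locally uniformly to its unique fixed point.
\<close>

section \<open>Convex analysis in Hilbert spaces\<close>

lemma nonneg_of_nonneg_linear_perturbation: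
  fixes a c :: real
  assumes "\<And>l. 0 < l \<Longrightarrow> l \<le> 1 \<Longrightarrow> 0 \<le> a + l * c"
  shows "0 \<le> a"
proof (rule tendsto_lowerbound)
  show "((\<lambda>l. a + l * c) \<longlongrightarrow> a) (at_right 0)"
    by (auto intro!: tendsto_eq_intros)
  show "\<forall>\<^sub>F l in at_right 0. 0 \<le> a + l * c"
    by (rule eventually_mono[OF eventually_at_right_real[of 0 1]]) (auto intro: assms)
qed simp

lemma norm_midpoint_diff_sq:
  fixes x y z :: "'a::real_inner"
  shows "(norm (midpoint x y - z))\<^sup>2 = (norm (x - z))\<^sup>2 / 2 + (norm (y - z))\<^sup>2 / 2 - (norm (x - y))\<^sup>2 / 4"
  unfolding power2_norm_eq_inner midpoint_def
  by (simp add: inner_add_left inner_add_right inner_diff_left inner_diff_right inner_commute field_simps)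

lemma norm_segment_diff_sq:
  fixes p v z :: "'a::real_inner"
  shows "(norm ((1 - l) *\<^sub>R p + l *\<^sub>R v - z))\<^sup>2
           = (norm (p - z))\<^sup>2 + 2 * l * ((p - z) \<bullet> (v - p)) + l\<^sup>2 * (norm (v - p))\<^sup>2"
proof -
  have "(1 - l) *\<^sub>R p + l *\<^sub>R v - z = (p - z) + l *\<^sub>R (v - p)" by (simp add: algebra_simps)
  then show ?thesis unfolding power2_norm_eq_inner
    by (simp add: inner_diff_left inner_diff_right inner_commute algebra_simps power2_eq_square)
qed

lemma midpoint_in_convex:
  assumes "convex K" "a \<in> K" "b \<in> K"
  shows "midpoint a b \<in> K"
  using assms midpoint_in_closed_segment closed_segment_subset by blast

lemma midpoint_strongly_convex_attains_min:
  fixes F :: "'a::{real_normed_vector,complete_space} \<Rightarrow> real"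
  assumes K: "closed K" "convex K" "K \<noteq> {}"
    and cont: "continuous_on K F" and bdd: "bdd_below (F ` K)" and c: "c > 0"
    and mid: "\<And>a b. a \<in> K \<Longrightarrow> b \<in> K \<Longrightarrow> c * (norm (a - b))\<^sup>2 \<le> (F a + F b) / 2 - F (midpoint a b)"
  obtains p where "p \<in> K" "\<And>v. v \<in> K \<Longrightarrow> F p \<le> F v"
proof -
  define \<mu> where "\<mu> = Inf (F ` K)"
  have \<mu>_le: "\<mu> \<le> F v" if "v \<in> K" for v
    unfolding \<mu>_def using bdd that by (intro cInf_lower) auto
  have "\<exists>x\<in>K. F x < \<mu> + 1 / Suc n" for n
    using cInf_lessD[of "F ` K" "\<mu> + 1 / Suc n"] K(3) unfolding \<mu>_def by auto
  then obtain x where x: "\<And>n. x n \<in> K" "\<And>n. F (x n) < \<mu> + 1 / Suc n" by metis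
  have close: "c * (norm (x m - x n))\<^sup>2 < 1 / Suc N" if "N \<le> m" "N \<le> n" for m n N
  proof -
    have "1 / Suc m \<le> 1 / Suc N" "1 / Suc n \<le> 1 / Suc N"
      using that by (auto simp: field_simps)
    moreover have "c * (norm (x m - x n))\<^sup>2 \<le> (F (x m) + F (x n)) / 2 - \<mu>"
      using mid[OF x(1) x(1), of m n] \<mu>_le[OF midpoint_in_convex[OF K(2) x(1) x(1)], of m n]
      by linarith
    ultimately show ?thesis using x(2)[of m] x(2)[of n] by argo
  qed
  have "Cauchy x"
  proof (rule CauchyI)
    fix e :: real assume "e > 0"
    obtain N where N: "1 / Suc N < c * e\<^sup>2"
      using reals_Archimedean c \<open>e > 0\<close> by (metis inverse_eq_divide mult_pos_pos zero_less_power)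
    have "norm (x m - x n) < e" if "N \<le> m" "N \<le> n" for m n
    proof -
      have "c * (norm (x m - x n))\<^sup>2 < c * e\<^sup>2" using close[OF that] N by linarith
      then show ?thesis using c \<open>e > 0\<close> by (simp add: power_less_imp_less_base)
    qed
    then show "\<exists>N. \<forall>m\<ge>N. \<forall>n\<ge>N. norm (x m - x n) < e" by blast
  qed
  then obtain p where p: "x \<longlonglongrightarrow> p" using Cauchy_convergent_iff convergent_def by blast
  have pK: "p \<in> K" using closed_sequentially[OF K(1)] x(1) p by blast
  have "(\<lambda>n. F (x n)) \<longlonglongrightarrow> F p"
    by (rule continuous_on_tendsto_compose[OF cont p pK]) (use x(1) in auto)
  moreover have "(\<lambda>n. \<mu> + 1 / Suc n) \<longlonglongrightarrow> \<mu>"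
    using tendsto_add[OF tendsto_const LIMSEQ_Suc[OF lim_inverse_n'], of \<mu>]
    by (simp add: divide_inverse)
  ultimately have "F p \<le> \<mu>"
    using x(2) by (intro LIMSEQ_le) (auto intro: less_imp_le)
  then show ?thesis using that pK \<mu>_le by force
qed

lemma prox_objective_min_imp_inequality:
  fixes \<phi> :: "'a::real_inner \<Rightarrow> real"
  assumes K: "convex K" and \<phi>: "convex_on K \<phi>" and p: "p \<in> K"
    and min: "\<And>v. v \<in> K \<Longrightarrow> (norm (p - z))\<^sup>2 / 2 + \<phi> p \<le> (norm (v - z))\<^sup>2 / 2 + \<phi> v"
    and v: "v \<in> K"
  shows "(z - p) \<bullet> (v - p) \<le> \<phi> v - \<phi> p"
proof -
  have "0 \<le> (p - z) \<bullet> (v - p) + \<phi> v - \<phi> p"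
  proof (rule nonneg_of_nonneg_linear_perturbation)
    fix l :: real assume l: "0 < l" "l \<le> 1"
    define y where "y = (1 - l) *\<^sub>R p + l *\<^sub>R v"
    have "y \<in> K" using convexD_alt[OF K p v] l unfolding y_def by simp
    then have "(norm (p - z))\<^sup>2 / 2 + \<phi> p \<le> (norm (y - z))\<^sup>2 / 2 + \<phi> y" by (rule min)
    also have "\<phi> y \<le> (1 - l) * \<phi> p + l * \<phi> v"
      unfolding y_def using l by (intro convex_onD[OF \<phi>]) (use p v in auto)
    finally have "0 \<le> l * ((p - z) \<bullet> (v - p) + \<phi> v - \<phi> p + l * ((norm (v - p))\<^sup>2 / 2))"
      unfolding y_def norm_segment_diff_sq by (simp add: field_simps power2_eq_square)
    then show "0 \<le> (p - z) \<bullet> (v - p) + \<phi> v - \<phi> p + l * ((norm (v - p))\<^sup>2 / 2)"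
      using l by (simp add: zero_le_mult_iff)
  qed
  then show ?thesis by (simp add: inner_diff_left inner_diff_right)
qed

lemma prox_exists:
  fixes \<phi> :: "'a::{real_inner,complete_space} \<Rightarrow> real"
  assumes K: "closed K" "convex K" "K \<noteq> {}" and \<phi>: "convex_on K \<phi>" "L-lipschitz_on K \<phi>"
  obtains p where "p \<in> K" "\<And>v. v \<in> K \<Longrightarrow> (z - p) \<bullet> (v - p) \<le> \<phi> v - \<phi> p"
proof -
  define F where "F v = (norm (v - z))\<^sup>2 / 2 + \<phi> v" for v
  obtain v0 where v0: "v0 \<in> K" using K by auto
  have L: "L \<ge> 0" using \<phi>(2) lipschitz_on_nonneg by blast
  have "\<phi> v0 - L * norm (z - v0) - L\<^sup>2 / 2 \<le> F v" if v: "v \<in> K" for v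
  proof -
    have "\<phi> v0 - \<phi> v \<le> L * norm (v - v0)"
      using lipschitz_onD[OF \<phi>(2) v v0] by (simp add: dist_real_def dist_norm)
    also have "\<dots> \<le> L * norm (v - z) + L * norm (z - v0)"
      using L norm_triangle_ineq[of "v - z" "z - v0"]
      by (simp add: mult_left_mono flip: distrib_left)
    also have "L * norm (v - z) \<le> (norm (v - z))\<^sup>2 / 2 + L\<^sup>2 / 2"
      using sum_power2_ge_zero[of "norm (v - z) - L" 0] by (simp add: power2_diff field_simps)
    finally show ?thesis unfolding F_def by linarith
  qed
  then have "bdd_below (F ` K)" by (rule bdd_belowI2)
  moreover have "continuous_on K F"
    unfolding F_def by (intro continuous_intros lipschitz_on_continuous_on[OF \<phi>(2)]) auto
  moreover have "(1/8) * (norm (a - b))\<^sup>2 \<le> (F a + F b) / 2 - F (midpoint a b)"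
    if "a \<in> K" "b \<in> K" for a b
  proof -
    have "midpoint a b = (1 - 1/2) *\<^sub>R a + (1/2) *\<^sub>R b"
      unfolding midpoint_def by (simp add: scaleR_add_right)
    then have "\<phi> (midpoint a b) \<le> (\<phi> a + \<phi> b) / 2"
      using convex_onD[OF \<phi>(1), of "1/2" a b] that by simp
    then show ?thesis unfolding F_def norm_midpoint_diff_sq by argo
  qed
  ultimately obtain p where "p \<in> K" "\<And>v. v \<in> K \<Longrightarrow> F p \<le> F v"
    using midpoint_strongly_convex_attains_min[OF K, of F "1/8"] by auto
  then show ?thesis
    using that prox_objective_min_imp_inequality[OF K(2) \<phi>(1)] unfolding F_def by blast
qed

lemma prox_nonexpansive:
  fixes p1 p2 z1 z2 :: "'a::real_inner"
  assumes "(z1 - p1) \<bullet> (p2 - p1) \<le> \<phi> p2 - \<phi> p1" "(z2 - p2) \<bullet> (p1 - p2) \<le> \<phi> p1 - \<phi> p2"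
  shows "norm (p1 - p2) \<le> norm (z1 - z2)"
proof -
  have "(norm (p1 - p2))\<^sup>2 \<le> (z1 - z2) \<bullet> (p1 - p2)"
    using assms unfolding power2_norm_eq_inner
    by (simp add: inner_diff_left inner_diff_right algebra_simps)
  also have "\<dots> \<le> norm (z1 - z2) * norm (p1 - p2)" by (rule norm_cauchy_schwarz)
  finally show ?thesis by (cases "p1 = p2") (simp_all add: power2_eq_square)
qed

lemma mem_normal_cone_iff: "\<xi> \<in> normal_cone D x \<longleftrightarrow> x \<in> D \<and> (\<forall>w\<in>D. \<xi> \<bullet> (w - x) \<le> 0)"
  by (simp add: normal_cone_def)

lemma neg_mem_normal_cone_reflect_iff:
  "- u \<in> normal_cone ((\<lambda>\<xi>. a - \<xi>) ` C) x \<longleftrightarrow> u \<in> normal_cone C (a - x)"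
proof -
  have "x \<in> (\<lambda>\<xi>. a - \<xi>) ` C \<longleftrightarrow> a - x \<in> C"
    by (auto simp: image_iff intro!: bexI[where x = "a - x"])
  then show ?thesis unfolding mem_normal_cone_iff by (auto simp: inner_diff_right)
qed

lemma closed_convex_cone_separation:
  fixes E :: "'a::{real_inner,complete_space} set"
  assumes E: "closed E" "convex E" "cone E" "E \<noteq> {}" and q: "q \<notin> E"
  obtains d where "\<And>e. e \<in> E \<Longrightarrow> d \<bullet> e \<le> 0" "0 < d \<bullet> q"
proof -
  obtain p where p: "p \<in> E" and proj: "\<And>v. v \<in> E \<Longrightarrow> (q - p) \<bullet> (v - p) \<le> 0"
    using prox_exists[OF E(1,2,4) convex_on_const[THEN iffD2, OF E(2)] lipschitz_on_constant, where z = q]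
    by auto
  have "(q - p) \<bullet> p = 0"
    using proj[of 0] proj[of "2 *\<^sub>R p"] mem_cone[OF E(3) p, of 2] cone_contains_0[OF E(3)] E(4)
    by (simp add: inner_diff_right)
  then have "(q - p) \<bullet> e \<le> 0" if "e \<in> E" for e
    using proj[OF that] by (simp add: inner_diff_right)
  moreover have "0 < (q - p) \<bullet> q"
  proof -
    have "(q - p) \<bullet> q = (q - p) \<bullet> (q - p)"
      using \<open>(q - p) \<bullet> p = 0\<close> by (simp add: inner_diff_right)
    then show ?thesis using p q by auto
  qed
  ultimately show ?thesis using that by blast
qed

lemma closed_epigraph:
  assumes "closed K" "continuous_on K \<phi>"
  shows "closed (epigraph K \<phi>)"
proof -
  have "epigraph K \<phi> = (K \<times> UNIV) \<inter> (\<lambda>xy. \<phi> (fst xy) - snd xy) -` {..0}"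
    by (auto simp: epigraph_def)
  moreover have "continuous_on (K \<times> UNIV) (\<lambda>xy. \<phi> (fst xy) - snd xy)"
    by (intro continuous_intros continuous_on_compose2[OF assms(2)]) auto
  ultimately show ?thesis
    using assms(1) by (simp add: continuous_closed_preimage closed_Times)
qed

section \<open>Sublinear functionals on closed convex cones\<close>

locale sublinear_on_cone =
  fixes K :: "'a::{real_inner,complete_space} set" and \<phi> :: "'a \<Rightarrow> real"
  assumes closed: "closed K" and convex: "convex K" and cone: "cone K" and nonempty: "K \<noteq> {}"
    and convex_on: "convex_on K \<phi>"
    and homogeneous: "\<And>c v. 0 < c \<Longrightarrow> v \<in> K \<Longrightarrow> \<phi> (c *\<^sub>R v) = c * \<phi> v"
    and continuous_on: "continuous_on K \<phi>"
begin

lemma zero_mem: "0 \<in> K"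
  using cone cone_contains_0 nonempty by blast

lemma zero_eq: "\<phi> 0 = 0"
  using homogeneous[of 2 0] zero_mem by simp

lemma cone_epigraph: "cone (epigraph K \<phi>)"
  unfolding cone_def
proof (intro ballI allI impI)
  fix x :: "'a \<times> real" and c :: real assume "x \<in> epigraph K \<phi>" "0 \<le> c"
  then show "c *\<^sub>R x \<in> epigraph K \<phi>"
    using homogeneous[of c "fst x"] mem_cone[OF cone] zero_mem zero_eq
    by (cases "c = 0") (auto simp: epigraph_def mult_left_mono)
qed

definition linear_minorants :: "'a set" where
  "linear_minorants = {\<xi>. \<forall>v\<in>K. \<xi> \<bullet> v \<le> \<phi> v}"

lemma mem_linear_minorants: "\<xi> \<in> linear_minorants \<longleftrightarrow> (\<forall>v\<in>K. \<xi> \<bullet> v \<le> \<phi> v)"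
  by (simp add: linear_minorants_def)

lemma support_approx:
  assumes u: "u \<in> K" and e: "0 < e"
  obtains \<xi> where "\<xi> \<in> linear_minorants" "\<phi> u - e < \<xi> \<bullet> u"
proof -
  have "epigraph K \<phi> \<noteq> {}" using zero_mem by (auto simp: epigraph_def)
  moreover have "(u, \<phi> u - e) \<notin> epigraph K \<phi>" using e by (simp add: epigraph_def)
  ultimately obtain d where d: "\<And>x. x \<in> epigraph K \<phi> \<Longrightarrow> d \<bullet> x \<le> 0"
      and pos: "0 < d \<bullet> (u, \<phi> u - e)"
    using closed_convex_cone_separation[OF closed_epigraph[OF closed continuous_on]
        convex_epigraphI[OF convex_on] cone_epigraph] by blast
  obtain \<zeta> \<sigma> where d_eq: "d = (\<zeta>, \<sigma>)" by (cases d)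
  have sep: "\<zeta> \<bullet> w + \<sigma> * s \<le> 0" if "w \<in> K" "\<phi> w \<le> s" for w s
    using d[of "(w, s)"] that by (simp add: d_eq mem_epigraph)
  have "\<zeta> \<bullet> u + \<sigma> * \<phi> u \<le> 0" using sep[OF u] by simp
  then have "\<sigma> * e < 0" using pos by (simp add: d_eq algebra_simps)
  then have \<sigma>: "\<sigma> < 0" using e by (simp add: mult_less_0_iff)
  show ?thesis
  proof
    show "(- 1 / \<sigma>) *\<^sub>R \<zeta> \<in> linear_minorants"
      unfolding mem_linear_minorants
    proof
      fix v assume "v \<in> K"
      then show "((- 1 / \<sigma>) *\<^sub>R \<zeta>) \<bullet> v \<le> \<phi> v"
        using sep[of v "\<phi> v"] \<sigma> by (simp add: field_simps)
    qed
    show "\<phi> u - e < ((- 1 / \<sigma>) *\<^sub>R \<zeta>) \<bullet> u"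
      using pos \<sigma> unfolding d_eq by (simp add: field_simps)
  qed
qed

lemma mem_of_maximizer:
  assumes \<xi>0: "\<xi>0 \<in> linear_minorants" and max: "\<And>\<xi>. \<xi> \<in> linear_minorants \<Longrightarrow> \<xi> \<bullet> u \<le> \<xi>0 \<bullet> u"
  shows "u \<in> K"
proof (rule ccontr)
  assume "u \<notin> K"
  then obtain d where d: "\<And>v. v \<in> K \<Longrightarrow> d \<bullet> v \<le> 0" "0 < d \<bullet> u"
    using closed_convex_cone_separation[OF closed convex cone nonempty] by blast
  have "\<xi>0 + d \<in> linear_minorants"
    unfolding mem_linear_minorants
  proof
    fix v assume "v \<in> K"
    then show "(\<xi>0 + d) \<bullet> v \<le> \<phi> v"
      using \<xi>0 d(1)[of v] unfolding mem_linear_minorants inner_add_left by fastforce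
  qed
  from max[OF this] d(2) show False by (simp add: inner_add_left)
qed

lemma normal_cone_linear_minorants_iff:
  "u \<in> normal_cone linear_minorants \<xi>0 \<longleftrightarrow> u \<in> K \<and> (\<forall>v\<in>K. \<xi>0 \<bullet> (v - u) \<le> \<phi> v - \<phi> u)"
proof
  assume "u \<in> normal_cone linear_minorants \<xi>0"
  then have \<xi>0: "\<xi>0 \<in> linear_minorants" and normal: "\<forall>\<xi>\<in>linear_minorants. u \<bullet> (\<xi> - \<xi>0) \<le> 0"
    by (simp_all add: mem_normal_cone_iff)
  have max: "\<xi> \<bullet> u \<le> \<xi>0 \<bullet> u" if "\<xi> \<in> linear_minorants" for \<xi>
    using normal that by (simp add: inner_diff_right inner_commute)
  have u: "u \<in> K" using mem_of_maximizer[OF \<xi>0 max] .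
  have "\<phi> u \<le> \<xi>0 \<bullet> u"
  proof (rule field_le_epsilon)
    fix e :: real assume "0 < e"
    then obtain \<xi> where "\<xi> \<in> linear_minorants" "\<phi> u - e < \<xi> \<bullet> u"
      by (rule support_approx[OF u])
    with max[of \<xi>] show "\<phi> u \<le> \<xi>0 \<bullet> u + e" by linarith
  qed
  moreover have "\<xi>0 \<bullet> v \<le> \<phi> v" if "v \<in> K" for v
    using \<xi>0 that unfolding mem_linear_minorants by blast
  ultimately show "u \<in> K \<and> (\<forall>v\<in>K. \<xi>0 \<bullet> (v - u) \<le> \<phi> v - \<phi> u)"
    using u unfolding inner_diff_right by force
next
  assume "u \<in> K \<and> (\<forall>v\<in>K. \<xi>0 \<bullet> (v - u) \<le> \<phi> v - \<phi> u)"
  then have u: "u \<in> K" and vi: "\<And>v. v \<in> K \<Longrightarrow> \<xi>0 \<bullet> (v - u) \<le> \<phi> v - \<phi> u" by auto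
  \<comment> \<open>test the inequality with \<open>v = 0\<close> and \<open>v = 2u\<close>\<close>
  have "\<xi>0 \<bullet> u = \<phi> u"
    using vi[OF zero_mem] vi[OF mem_cone[OF cone u, of 2]] homogeneous[of 2 u] u zero_eq
    by (simp add: inner_diff_right)
  then have "\<xi>0 \<in> linear_minorants"
    using vi unfolding mem_linear_minorants inner_diff_right by force
  moreover have "u \<bullet> (\<xi> - \<xi>0) \<le> 0" if "\<xi> \<in> linear_minorants" for \<xi>
  proof -
    have "\<xi> \<bullet> u \<le> \<phi> u" using that u unfolding mem_linear_minorants by blast
    then show ?thesis using \<open>\<xi>0 \<bullet> u = \<phi> u\<close> by (simp add: inner_diff_right inner_commute)
  qed
  ultimately show "u \<in> normal_cone linear_minorants \<xi>0"
    unfolding mem_normal_cone_iff by blast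
qed

end

section \<open>The elliptic variational inequality\<close>

lemma strongly_monotone_step_sq:
  fixes A :: "'a::real_inner \<Rightarrow> 'a"
  assumes mon: "\<And>u v. m * (norm (u - v))\<^sup>2 \<le> (A u - A v) \<bullet> (u - v)"
    and lip: "\<And>u v. norm (A u - A v) \<le> L * norm (u - v)" and "0 \<le> \<rho>"
  shows "(norm ((z1 - \<rho> *\<^sub>R A z1) - (z2 - \<rho> *\<^sub>R A z2)))\<^sup>2
           \<le> (1 - 2 * \<rho> * m + \<rho>\<^sup>2 * L\<^sup>2) * (norm (z1 - z2))\<^sup>2"
proof -
  define a b where "a = z1 - z2" and "b = A z1 - A z2"
  have "(norm b)\<^sup>2 \<le> (L * norm a)\<^sup>2"
    using lip[of z1 z2] unfolding a_def b_def by (simp add: power_mono)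
  then have b: "\<rho>\<^sup>2 * (norm b)\<^sup>2 \<le> \<rho>\<^sup>2 * (L\<^sup>2 * (norm a)\<^sup>2)"
    by (simp add: power_mult_distrib mult_left_mono)
  have ba: "2 * \<rho> * (m * (norm a)\<^sup>2) \<le> 2 * \<rho> * (b \<bullet> a)"
    using mon[of z1 z2] \<open>0 \<le> \<rho>\<close> unfolding a_def b_def by (intro mult_left_mono) auto
  have "(z1 - \<rho> *\<^sub>R A z1) - (z2 - \<rho> *\<^sub>R A z2) = a - \<rho> *\<^sub>R b"
    unfolding a_def b_def by (simp add: algebra_simps)
  then have "(norm ((z1 - \<rho> *\<^sub>R A z1) - (z2 - \<rho> *\<^sub>R A z2)))\<^sup>2 = (norm (a - \<rho> *\<^sub>R b))\<^sup>2"
    by (simp only:)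
  also have "\<dots> = (norm a)\<^sup>2 - 2 * \<rho> * (b \<bullet> a) + \<rho>\<^sup>2 * (norm b)\<^sup>2"
    unfolding power2_norm_eq_inner
    by (simp add: inner_diff_left inner_diff_right inner_commute algebra_simps power2_eq_square)
  also have "\<dots> \<le> (norm a)\<^sup>2 - 2 * \<rho> * (m * (norm a)\<^sup>2) + \<rho>\<^sup>2 * (L\<^sup>2 * (norm a)\<^sup>2)"
    using b ba by linarith
  also have "\<dots> = (1 - 2 * \<rho> * m + \<rho>\<^sup>2 * L\<^sup>2) * (norm (z1 - z2))\<^sup>2"
    unfolding a_def by algebra
  finally show ?thesis .
qed

lemma Cset_eq: "Cset j K \<eta> = {\<xi>. \<forall>v\<in>K. \<xi> \<bullet> v \<le> j \<eta> v}"
  unfolding Cset_def Jext_def by (auto split: if_splits)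

locale strongly_monotone_vi =
  fixes A :: "'a::{real_inner,complete_space} \<Rightarrow> 'a"
    and K :: "'a set"
    and j :: "'b::real_normed_vector \<Rightarrow> 'a \<Rightarrow> real"
    and m\<^sub>A L\<^sub>A \<alpha>\<^sub>j :: real
  assumes K: "K \<noteq> {}" "closed K" "convex K" "cone K"
    and A_mon: "\<And>u v. (A u - A v) \<bullet> (u - v) \<ge> m\<^sub>A * (norm (u - v))\<^sup>2"
    and A_lip: "\<And>u v. norm (A u - A v) \<le> L\<^sub>A * norm (u - v)"
    and mA: "m\<^sub>A > 0" and LA: "L\<^sub>A > 0"
    and j_convex: "\<And>\<eta>. convex_on K (j \<eta>)"
    and j_hom: "\<And>\<eta> c v. c > 0 \<Longrightarrow> v \<in> K \<Longrightarrow> j \<eta> (c *\<^sub>R v) = c * j \<eta> v"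
    and j_lip: "\<And>\<eta>. \<exists>L. L-lipschitz_on K (j \<eta>)"
    and alpha: "\<alpha>\<^sub>j \<ge> 0"
    and j_ineq: "\<And>\<eta>1 \<eta>2 v1 v2. v1 \<in> K \<Longrightarrow> v2 \<in> K \<Longrightarrow>
        j \<eta>1 v2 - j \<eta>1 v1 + j \<eta>2 v1 - j \<eta>2 v2 \<le> \<alpha>\<^sub>j * norm (\<eta>1 - \<eta>2) * norm (v1 - v2)"
begin

lemma sublinear_on_cone_j: "sublinear_on_cone K (j \<eta>)"
proof
  show "continuous_on K (j \<eta>)" using j_lip[of \<eta>] lipschitz_on_continuous_on by blast
qed (use K j_convex j_hom in auto)

definition solves_vi :: "'b \<Rightarrow> 'a \<Rightarrow> 'a \<Rightarrow> bool" where
  "solves_vi \<eta> g u \<longleftrightarrow> u \<in> K \<and> (\<forall>v\<in>K. (g - A u) \<bullet> (v - u) \<le> j \<eta> v - j \<eta> u)"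

lemma neg_mem_normal_cone_Cset_t_iff:
  "- u \<in> normal_cone (Cset_t j K f \<eta> t) (A u + s) \<longleftrightarrow> solves_vi \<eta> (f t - s) u"
proof -
  interpret sublinear_on_cone K "j \<eta>" by (rule sublinear_on_cone_j)
  have C: "Cset j K \<eta> = linear_minorants" by (simp add: Cset_eq linear_minorants_def)
  have g: "f t - (A u + s) = (f t - s) - A u" by simp
  show ?thesis
    unfolding Cset_t_def neg_mem_normal_cone_reflect_iff C g normal_cone_linear_minorants_iff solves_vi_def ..
qed

lemma solves_vi_dist:
  assumes 1: "solves_vi \<eta>1 g1 u1" and 2: "solves_vi \<eta>2 g2 u2"
  shows "m\<^sub>A * norm (u1 - u2) \<le> norm (g1 - g2) + \<alpha>\<^sub>j * norm (\<eta>1 - \<eta>2)"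
proof -
  define d where "d = u1 - u2"
  have K12: "u1 \<in> K" "u2 \<in> K" using 1 2 by (auto simp: solves_vi_def)
  have "m\<^sub>A * (norm d)\<^sup>2 \<le> (A u1 - A u2) \<bullet> d" using A_mon unfolding d_def .
  also have "\<dots> \<le> (g1 - g2) \<bullet> d + (j \<eta>1 u2 - j \<eta>1 u1 + j \<eta>2 u1 - j \<eta>2 u2)"
    using 1 2 K12 unfolding solves_vi_def d_def
    by (fastforce simp: inner_diff_left inner_diff_right algebra_simps)
  also have "\<dots> \<le> norm (g1 - g2) * norm d + \<alpha>\<^sub>j * norm (\<eta>1 - \<eta>2) * norm d"
    using norm_cauchy_schwarz[of "g1 - g2" d] j_ineq[OF K12, of \<eta>1 \<eta>2] unfolding d_def by linarith
  finally have "norm d * (m\<^sub>A * norm d) \<le> norm d * (norm (g1 - g2) + \<alpha>\<^sub>j * norm (\<eta>1 - \<eta>2))"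
    by (simp add: power2_eq_square algebra_simps)
  then show ?thesis unfolding d_def
    using alpha by (cases "u1 = u2") (auto simp: mult_le_cancel_left)
qed

lemma solves_vi_unique: "solves_vi \<eta> g u1 \<Longrightarrow> solves_vi \<eta> g u2 \<Longrightarrow> u1 = u2"
  using solves_vi_dist[of \<eta> g u1 \<eta> g u2] mA by (simp add: mult_le_0_iff)

text \<open>The \<open>max\<close> only matters when the space is trivial: otherwise \<open>m\<^sub>A \<le> L\<^sub>A\<close>.\<close>

lemma gradient_step_contraction:
  defines "\<rho> \<equiv> m\<^sub>A / L\<^sub>A\<^sup>2" and "k \<equiv> sqrt (max 0 (1 - m\<^sub>A\<^sup>2 / L\<^sub>A\<^sup>2))"
  shows "norm ((z1 - \<rho> *\<^sub>R A z1) - (z2 - \<rho> *\<^sub>R A z2)) \<le> k * norm (z1 - z2)"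
proof (rule power2_le_imp_le)
  have "0 \<le> \<rho>" unfolding \<rho>_def using mA LA by simp
  have coeff: "1 - 2 * \<rho> * m\<^sub>A + \<rho>\<^sup>2 * L\<^sub>A\<^sup>2 = 1 - m\<^sub>A\<^sup>2 / L\<^sub>A\<^sup>2"
    unfolding \<rho>_def using LA by (simp add: field_simps power2_eq_square)
  have "(norm ((z1 - \<rho> *\<^sub>R A z1) - (z2 - \<rho> *\<^sub>R A z2)))\<^sup>2
      \<le> (1 - 2 * \<rho> * m\<^sub>A + \<rho>\<^sup>2 * L\<^sub>A\<^sup>2) * (norm (z1 - z2))\<^sup>2"
    by (rule strongly_monotone_step_sq[OF A_mon A_lip \<open>0 \<le> \<rho>\<close>])
  also have "\<dots> = (1 - m\<^sub>A\<^sup>2 / L\<^sub>A\<^sup>2) * (norm (z1 - z2))\<^sup>2"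
    unfolding coeff ..
  also have "\<dots> \<le> k\<^sup>2 * (norm (z1 - z2))\<^sup>2"
    unfolding k_def by (intro mult_right_mono) auto
  finally show "(norm ((z1 - \<rho> *\<^sub>R A z1) - (z2 - \<rho> *\<^sub>R A z2)))\<^sup>2 \<le> (k * norm (z1 - z2))\<^sup>2"
    by (simp add: power_mult_distrib)
qed (simp add: k_def)

lemma solves_vi_exists: "\<exists>u. solves_vi \<eta> g u"
proof -
  define \<rho> where "\<rho> = m\<^sub>A / L\<^sub>A\<^sup>2"
  have \<rho>: "0 < \<rho>" using mA LA by (simp add: \<rho>_def)
  obtain Lj where "Lj-lipschitz_on K (j \<eta>)" using j_lip by blast
  then have "(\<rho> * Lj)-lipschitz_on K (\<lambda>v. \<rho> * j \<eta> v)"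
    using \<rho> by (intro lipschitz_on_cmult_real_nonneg) auto
  moreover have "convex_on K (\<lambda>v. \<rho> * j \<eta> v)"
    using \<rho> j_convex by (intro convex_on_cmul) auto
  ultimately have "\<exists>p. p \<in> K \<and> (\<forall>v\<in>K. (z - p) \<bullet> (v - p) \<le> \<rho> * j \<eta> v - \<rho> * j \<eta> p)" for z
    using prox_exists[OF K(2,3,1)] by metis
  then obtain P where P: "\<And>z. P z \<in> K"
    and prox: "\<And>z v. v \<in> K \<Longrightarrow> (z - P z) \<bullet> (v - P z) \<le> \<rho> * j \<eta> v - \<rho> * j \<eta> (P z)"
    by metis
  define k where "k = sqrt (max 0 (1 - m\<^sub>A\<^sup>2 / L\<^sub>A\<^sup>2))"
  have k: "0 \<le> k" "k < 1" using mA LA by (auto simp: k_def)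
  define T where "T z = P (z - \<rho> *\<^sub>R (A z - g))" for z
  have "dist (T z1) (T z2) \<le> k * dist z1 z2" for z1 z2
  proof -
    have "dist (T z1) (T z2) \<le> norm ((z1 - \<rho> *\<^sub>R (A z1 - g)) - (z2 - \<rho> *\<^sub>R (A z2 - g)))"
      unfolding T_def dist_norm by (intro prox_nonexpansive[where \<phi> = "\<lambda>v. \<rho> * j \<eta> v"] prox P)
    also have "\<dots> = norm ((z1 - \<rho> *\<^sub>R A z1) - (z2 - \<rho> *\<^sub>R A z2))"
      by (simp add: algebra_simps)
    also have "\<dots> \<le> k * dist z1 z2"
      using gradient_step_contraction unfolding \<rho>_def k_def dist_norm .
    finally show ?thesis .
  qed
  then obtain u where u: "u \<in> K" "T u = u"
    using Banach_fix[OF _ K(1) k, of T] K(2) P by (auto simp: complete_eq_closed T_def)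
  have "\<rho> * ((g - A u) \<bullet> (v - u)) \<le> \<rho> * (j \<eta> v - j \<eta> u)" if "v \<in> K" for v
    using prox[OF that, of "u - \<rho> *\<^sub>R (A u - g)"] u(2) unfolding T_def
    by (simp add: algebra_simps)
  then have "solves_vi \<eta> g u"
    using u(1) \<rho> unfolding solves_vi_def by (simp add: mult_le_cancel_left_pos)
  then show ?thesis ..
qed

definition vi_sol :: "'b \<Rightarrow> 'a \<Rightarrow> 'a" where
  "vi_sol \<eta> g = (THE u. solves_vi \<eta> g u)"

lemma solves_vi_vi_sol: "solves_vi \<eta> g (vi_sol \<eta> g)"
  unfolding vi_sol_def using solves_vi_exists solves_vi_unique by (metis theI)

lemma solves_vi_iff_vi_sol: "solves_vi \<eta> g u \<longleftrightarrow> vi_sol \<eta> g = u"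
  using solves_vi_vi_sol solves_vi_unique by blast

lemma lipschitz_vi_sol: "((1 + \<alpha>\<^sub>j) / m\<^sub>A)-lipschitz_on UNIV (\<lambda>(\<eta>, g). vi_sol \<eta> g)"
proof (rule lipschitz_onI)
  fix x y :: "'b \<times> 'a"
  obtain \<eta>1 g1 \<eta>2 g2 where xy: "x = (\<eta>1, g1)" "y = (\<eta>2, g2)" by (cases x, cases y)
  have "m\<^sub>A * norm (vi_sol \<eta>1 g1 - vi_sol \<eta>2 g2) \<le> norm (g1 - g2) + \<alpha>\<^sub>j * norm (\<eta>1 - \<eta>2)"
    by (rule solves_vi_dist[OF solves_vi_vi_sol solves_vi_vi_sol])
  also have "\<dots> \<le> (1 + \<alpha>\<^sub>j) * dist x y"
    using norm_fst_le[of "\<eta>1 - \<eta>2" "g1 - g2"] norm_snd_le[of "g1 - g2" "\<eta>1 - \<eta>2"] alpha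
    unfolding xy dist_norm by (simp add: algebra_simps add_mono mult_left_mono)
  finally show "dist ((\<lambda>(\<eta>, g). vi_sol \<eta> g) x) ((\<lambda>(\<eta>, g). vi_sol \<eta> g) y) \<le> (1 + \<alpha>\<^sub>j) / m\<^sub>A * dist x y"
    using mA unfolding xy dist_norm by (simp add: field_simps)
qed (use mA alpha in simp)

end

section \<open>History-dependent operators\<close>

definition time_interval :: "real set \<Rightarrow> bool" where
  "time_interval I \<longleftrightarrow> closed I \<and> I \<subseteq> {0..} \<and> (\<forall>t\<in>I. {0..t} \<subseteq> I)"

lemma time_intervalD:
  assumes "time_interval I" "t \<in> I"
  shows "0 \<le> t" "{0..t} \<subseteq> I"
  using assms by (auto simp: time_interval_def)

lemma time_interval_Int_atMost: "time_interval I \<Longrightarrow> time_interval (I \<inter> {..b})"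
  by (auto simp: time_interval_def)

lemma compact_time_interval_Int_atMost:
  assumes "time_interval I"
  shows "compact (I \<inter> {..b})"
proof -
  have "I \<inter> {..b} = I \<inter> {0..b}" using assms by (auto simp: time_interval_def)
  then show ?thesis using assms by (simp add: time_interval_def closed_Int_compact)
qed

lemma continuous_on_if_continuous_on_Int_atMost:
  assumes "\<And>b. continuous_on (I \<inter> {..b}) u"
  shows "continuous_on I (u :: real \<Rightarrow> 'a::topological_space)"
  unfolding continuous_on_eq_continuous_within
proof
  fix t assume "t \<in> I"
  have "at t within I = at t within I \<inter> {..t + 1}"
    by (rule at_within_nhd[of _ "{..<t + 1}"]) auto
  then show "continuous (at t within I) u"
    using assms[of "t + 1"] \<open>t \<in> I\<close> by (simp add: continuous_on_eq_continuous_within)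
qed

lemma history_dependentD:
  assumes "history_dependent I P" "compact J" "J \<subseteq> I"
  shows "\<exists>L>0. \<forall>u1 u2. continuous_on I u1 \<and> continuous_on I u2 \<longrightarrow>
           (\<forall>t\<in>J. norm (P u1 t - P u2 t) \<le> L * integral {0..t} (\<lambda>s. norm (u1 s - u2 s)))"
  using assms unfolding history_dependent_def by blast

lemma integral_le_exp_bound:
  fixes \<psi> :: "real \<Rightarrow> real"
  assumes c: "0 < c" and t: "0 \<le> t" and cont: "continuous_on {0..t} \<psi>"
    and le: "\<And>s. s \<in> {0..t} \<Longrightarrow> \<psi> s \<le> B * exp (2 * c * s)"
  shows "c * integral {0..t} \<psi> \<le> B / 2 * (exp (2 * c * t) - 1)"
proof -
  have "((\<lambda>s. B * exp (2 * c * s)) has_integral B * exp (2 * c * t) / (2 * c) - B * exp (2 * c * 0) / (2 * c)) {0..t}"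
  proof (rule fundamental_theorem_of_calculus[OF t])
    fix s assume "s \<in> {0..t}"
    show "((\<lambda>s. B * exp (2 * c * s) / (2 * c)) has_vector_derivative B * exp (2 * c * s)) (at s within {0..t})"
      using c
      by (auto intro!: derivative_eq_intros simp flip: has_real_derivative_iff_has_vector_derivative)
  qed
  then have int: "((\<lambda>s. B * exp (2 * c * s)) has_integral B * exp (2 * c * t) / (2 * c) - B / (2 * c)) {0..t}"
    by simp
  have "integral {0..t} \<psi> \<le> B * exp (2 * c * t) / (2 * c) - B / (2 * c)"
    by (rule has_integral_le[OF integrable_integral[OF integrable_continuous_interval[OF cont]] int])
      (use le in auto)
  then show ?thesis using c by (simp add: field_simps)
qed

text \<open>The weight \<open>exp (2 c t)\<close> is chosen so that \<open>c \<integral>\<^sub>0\<^sup>t exp (2 c s) ds \<le> exp (2 c t) / 2\<close>: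
  every integration step halves the bound.\<close>

lemma halving_iteration_bound:
  fixes \<psi> :: "nat \<Rightarrow> real \<Rightarrow> real"
  assumes J: "time_interval J" and c: "0 < c" and M: "0 \<le> M"
    and cont: "\<And>k. continuous_on J (\<psi> k)"
    and base: "\<And>t. t \<in> J \<Longrightarrow> \<psi> 0 t \<le> M"
    and step: "\<And>k t. t \<in> J \<Longrightarrow> \<psi> (Suc k) t \<le> c * integral {0..t} (\<psi> k)"
  shows "t \<in> J \<Longrightarrow> \<psi> k t \<le> M * exp (2 * c * t) * (1 / 2) ^ k"
proof (induction k arbitrary: t)
  case 0
  have "M * 1 \<le> M * exp (2 * c * t)"
    using time_intervalD(1)[OF J 0] c M by (intro mult_left_mono) auto
  then show ?case using base[OF 0] by simp
next
  case (Suc k)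
  note t = time_intervalD[OF J Suc.prems]
  have "\<psi> (Suc k) t \<le> c * integral {0..t} (\<psi> k)" by (rule step[OF Suc.prems])
  also have "\<dots> \<le> M * (1 / 2) ^ k / 2 * (exp (2 * c * t) - 1)"
  proof (rule integral_le_exp_bound[OF c t(1)])
    show "continuous_on {0..t} (\<psi> k)" using continuous_on_subset[OF cont t(2)] .
    show "\<psi> k s \<le> M * (1 / 2) ^ k * exp (2 * c * s)" if "s \<in> {0..t}" for s
      using Suc.IH[of s] t(2) that by (simp add: ac_simps subset_iff)
  qed
  also have "\<dots> \<le> M * exp (2 * c * t) * (1 / 2) ^ Suc k"
    using M by (simp add: field_simps)
  finally show ?case .
qed

lemma uniformly_Cauchy_on_halving_increments:
  fixes f :: "nat \<Rightarrow> 'a \<Rightarrow> 'b::real_normed_vector"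
  assumes incr: "\<And>n x. x \<in> X \<Longrightarrow> norm (f (Suc n) x - f n x) \<le> B * (1 / 2) ^ n"
  shows "uniformly_Cauchy_on X f"
proof (rule uniformly_Cauchy_onI')
  have tail: "norm (f n x - f m x) \<le> 2 * B * (1 / 2) ^ m" if "m \<le> n" "x \<in> X" for m n x
  proof -
    have "norm (f n x - f m x) = norm (\<Sum>i = m..<n. f (Suc i) x - f i x)"
      using sum_Suc_diff'[OF that(1), of "\<lambda>i. f i x"] by simp
    also have "\<dots> \<le> (\<Sum>i = m..<n. B * (1 / 2) ^ i)"
      using incr[OF that(2)] by (intro order_trans[OF norm_sum sum_mono]) auto
    also have "\<dots> = 2 * B * ((1 / 2) ^ m - (1 / 2) ^ n)"
      using that(1) by (induction rule: dec_induct) (simp_all add: algebra_simps)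
    also have "\<dots> \<le> 2 * B * (1 / 2) ^ m"
    proof -
      have "0 \<le> B" using order_trans[OF norm_ge_zero incr[OF that(2), of 0]] by simp
      then show ?thesis by (simp add: algebra_simps)
    qed
    finally show ?thesis .
  qed
  fix e :: real assume "0 < e"
  have "(\<lambda>m. 2 * B * (1 / 2 :: real) ^ m) \<longlonglongrightarrow> 0"
    by (intro tendsto_mult_right_zero LIMSEQ_power_zero) auto
  then have "\<forall>\<^sub>F m in sequentially. 2 * B * (1 / 2) ^ m < e"
    using \<open>0 < e\<close> by (rule order_tendstoD)
  then obtain M where M: "\<And>m. M \<le> m \<Longrightarrow> 2 * B * (1 / 2) ^ m < e"
    unfolding eventually_sequentially by blast
  show "\<exists>M. \<forall>x\<in>X. \<forall>m\<ge>M. \<forall>n>m. dist (f m x) (f n x) < e"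
  proof (intro exI ballI allI impI)
    fix x m n assume "x \<in> X" "M \<le> m" "m < n"
    then have "norm (f n x - f m x) < e" using tail[of m n x] M[of m] by simp
    then show "dist (f m x) (f n x) < e" by (simp add: dist_norm norm_minus_commute)
  qed
qed

lemma history_dependent_fixed_point_unique:
  fixes \<Lambda> :: "(real \<Rightarrow> 'a::real_normed_vector) \<Rightarrow> real \<Rightarrow> 'a"
  assumes I: "time_interval I" and hd: "history_dependent I \<Lambda>"
    and u: "continuous_on I u" "\<And>t. t \<in> I \<Longrightarrow> \<Lambda> u t = u t"
    and v: "continuous_on I v" "\<And>t. t \<in> I \<Longrightarrow> \<Lambda> v t = v t"
    and t: "t \<in> I"
  shows "u t = v t"
proof -
  define J where "J = I \<inter> {..t}"
  have J: "time_interval J" "compact J" "J \<subseteq> I" "t \<in> J"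
    unfolding J_def using I t
    by (auto simp: time_interval_Int_atMost compact_time_interval_Int_atMost)
  obtain c where c: "0 < c" and H: "\<forall>w1 w2. continuous_on I w1 \<and> continuous_on I w2 \<longrightarrow>
      (\<forall>s\<in>J. norm (\<Lambda> w1 s - \<Lambda> w2 s) \<le> c * integral {0..s} (\<lambda>r. norm (w1 r - w2 r)))"
    using history_dependentD[OF hd J(2,3)] by blast
  have cont: "continuous_on J (\<lambda>s. norm (u s - v s))"
    using continuous_on_subset[OF u(1) J(3)] continuous_on_subset[OF v(1) J(3)]
    by (intro continuous_intros)
  obtain M where M: "0 \<le> M" "\<And>s. s \<in> J \<Longrightarrow> norm (norm (u s - v s)) \<le> M"
    using continuous_on_compact_bound[OF J(2) cont] by blast
  have "norm (u t - v t) \<le> M * exp (2 * c * t) * (1 / 2) ^ k" for k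
  proof (rule halving_iteration_bound[OF J(1) c M(1) _ _ _ J(4), where \<psi> = "\<lambda>_ s. norm (u s - v s)"])
    show "norm (u s - v s) \<le> c * integral {0..s} (\<lambda>s. norm (u s - v s))" if "s \<in> J" for s
      using H[rule_format, OF conjI[OF u(1) v(1)] that] u(2) v(2) J(3) that by auto
  qed (use cont M(2) in auto)
  moreover have "(\<lambda>k. M * exp (2 * c * t) * (1 / 2 :: real) ^ k) \<longlonglongrightarrow> 0"
    by (intro tendsto_mult_right_zero LIMSEQ_power_zero) auto
  ultimately have "norm (u t - v t) \<le> 0"
    by (intro LIMSEQ_le_const[OF _ exI[of _ 0]]) auto
  then show ?thesis by simp
qed

lemma maps_continuous_funpow:
  fixes \<Lambda> :: "(real \<Rightarrow> 'a::real_normed_vector) \<Rightarrow> real \<Rightarrow> 'a"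
  assumes "maps_continuous I \<Lambda>" "continuous_on I w"
  shows "continuous_on I ((\<Lambda> ^^ k) w)"
  by (induction k) (use assms in \<open>simp_all add: maps_continuous_def\<close>)

lemma history_dependent_iterate_increments:
  fixes \<Lambda> :: "(real \<Rightarrow> 'a::real_normed_vector) \<Rightarrow> real \<Rightarrow> 'a"
  assumes I: "time_interval I" and cont: "maps_continuous I \<Lambda>" and hd: "history_dependent I \<Lambda>"
    and w0: "continuous_on I w0"
  shows "\<exists>B. \<forall>k. \<forall>t\<in>I \<inter> {..b}. norm ((\<Lambda> ^^ Suc k) w0 t - (\<Lambda> ^^ k) w0 t) \<le> B * (1 / 2) ^ k"
proof -
  define w where "w k = (\<Lambda> ^^ k) w0" for k
  have w: "continuous_on I (w k)" for k
    unfolding w_def using cont w0 by (rule maps_continuous_funpow)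
  define J where "J = I \<inter> {..b}"
  have J: "time_interval J" "compact J" "J \<subseteq> I"
    unfolding J_def using I
    by (auto simp: time_interval_Int_atMost compact_time_interval_Int_atMost)
  obtain c where c: "0 < c" and H: "\<forall>u1 u2. continuous_on I u1 \<and> continuous_on I u2 \<longrightarrow>
      (\<forall>t\<in>J. norm (\<Lambda> u1 t - \<Lambda> u2 t) \<le> c * integral {0..t} (\<lambda>s. norm (u1 s - u2 s)))"
    using history_dependentD[OF hd J(2,3)] by blast
  have cont_incr: "continuous_on J (\<lambda>t. norm (w (Suc k) t - w k t))" for k
    using continuous_on_subset[OF w J(3)] by (intro continuous_intros)
  obtain M where M: "0 \<le> M" "\<And>t. t \<in> J \<Longrightarrow> norm (norm (w 1 t - w 0 t)) \<le> M"
    using continuous_on_compact_bound[OF J(2) cont_incr[of 0]] by auto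
  have "norm ((\<Lambda> ^^ Suc k) w0 t - (\<Lambda> ^^ k) w0 t) \<le> M * exp (2 * c * b) * (1 / 2) ^ k"
    if t: "t \<in> I \<inter> {..b}" for k t
  proof -
    have "norm (w (Suc k) t - w k t) \<le> M * exp (2 * c * t) * (1 / 2) ^ k"
    proof (rule halving_iteration_bound[OF J(1) c M(1) cont_incr _ _ t[folded J_def]])
      show "norm (w (Suc (Suc k)) s - w (Suc k) s) \<le> c * integral {0..s} (\<lambda>s. norm (w (Suc k) s - w k s))"
        if "s \<in> J" for k s
        using H[rule_format, OF conjI[OF w[of "Suc k"] w[of k]] that] by (simp add: w_def)
    qed (use M(2) in auto)
    also have "\<dots> \<le> M * exp (2 * c * b) * (1 / 2) ^ k"
      using t c M(1) unfolding J_def by (intro mult_right_mono mult_left_mono) auto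
    finally show ?thesis unfolding w_def .
  qed
  then show ?thesis by blast
qed

lemma history_dependent_tendsto:
  fixes \<Lambda> :: "(real \<Rightarrow> 'a::real_normed_vector) \<Rightarrow> real \<Rightarrow> 'b::real_normed_vector"
  assumes hd: "history_dependent I \<Lambda>" and t: "t \<in> I" "{0..t} \<subseteq> I"
    and w: "\<And>n. continuous_on I (w n)" and u: "continuous_on I u"
    and lim: "uniform_limit {0..t} w u sequentially"
  shows "(\<lambda>n. \<Lambda> (w n) t) \<longlonglongrightarrow> \<Lambda> u t"
proof -
  obtain c where H0: "\<forall>u1 u2. continuous_on I u1 \<and> continuous_on I u2 \<longrightarrow>
      (\<forall>s\<in>{t}. norm (\<Lambda> u1 s - \<Lambda> u2 s) \<le> c * integral {0..s} (\<lambda>r. norm (u1 r - u2 r)))"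
    using history_dependentD[OF hd compact_sing] t(1) by blast
  have H: "norm (\<Lambda> (w n) t - \<Lambda> u t) \<le> c * integral {0..t} (\<lambda>s. norm (w n s - u s))" for n
    using H0[rule_format, OF conjI[OF w u]] by simp
  have "uniform_limit {0..t} (\<lambda>n s. norm (w n s - u s)) (\<lambda>_. 0) sequentially"
    using lim by (simp add: uniform_limit_iff dist_norm)
  moreover have "continuous_on {0..t} (\<lambda>s. norm (w n s - u s))" for n
    using continuous_on_subset[OF w t(2)] continuous_on_subset[OF u t(2)]
    by (intro continuous_intros)
  ultimately obtain i z where i: "\<And>n. ((\<lambda>s. norm (w n s - u s)) has_integral i n) {0..t}"
      and z: "((\<lambda>_. 0) has_integral z) {0..t}" and "i \<longlonglongrightarrow> z"
    by (rule uniform_limit_integral) auto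
  moreover have "(\<lambda>n. integral {0..t} (\<lambda>s. norm (w n s - u s))) = i"
    using i by (intro ext integral_unique)
  moreover have "z = 0" using z by (simp add: has_integral_0_eq)
  ultimately have "(\<lambda>n. integral {0..t} (\<lambda>s. norm (w n s - u s))) \<longlonglongrightarrow> 0" by simp
  then have "(\<lambda>n. c * integral {0..t} (\<lambda>s. norm (w n s - u s))) \<longlonglongrightarrow> 0"
    by (rule tendsto_mult_right_zero)
  then have "(\<lambda>n. \<Lambda> (w n) t - \<Lambda> u t) \<longlonglongrightarrow> 0"
    by (rule Lim_null_comparison[OF always_eventually[OF allI[OF H]]])
  then show ?thesis by (simp add: LIM_zero_iff)
qed

lemma history_dependent_fixed_point_exists:
  fixes \<Lambda> :: "(real \<Rightarrow> 'a::{real_normed_vector,complete_space}) \<Rightarrow> real \<Rightarrow> 'a"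
  assumes I: "time_interval I" and cont: "maps_continuous I \<Lambda>" and hd: "history_dependent I \<Lambda>"
  obtains u where "continuous_on I u" "\<And>t. t \<in> I \<Longrightarrow> \<Lambda> u t = u t"
proof -
  define w where "w k = (\<Lambda> ^^ k) (\<lambda>_. 0)" for k
  have w: "continuous_on I (w k)" for k
    unfolding w_def using cont continuous_on_const by (rule maps_continuous_funpow)
  define u where "u t = lim (\<lambda>n. w n t)" for t
  have lim: "uniform_limit (I \<inter> {..b}) w u sequentially" for b
  proof -
    obtain B where "\<forall>k. \<forall>t\<in>I \<inter> {..b}. norm (w (Suc k) t - w k t) \<le> B * (1 / 2) ^ k"
      using history_dependent_iterate_increments[OF I cont hd continuous_on_const] unfolding w_def
      by blast
    then have "uniformly_convergent_on (I \<inter> {..b}) w"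
      by (intro Cauchy_uniformly_convergent uniformly_Cauchy_on_halving_increments) blast
    then obtain l where l: "uniform_limit (I \<inter> {..b}) w l sequentially"
      unfolding uniformly_convergent_on_def by blast
    moreover have "u t = l t" if "t \<in> I \<inter> {..b}" for t
      unfolding u_def using tendsto_uniform_limitI[OF l that] by (rule limI)
    ultimately show ?thesis by (subst uniform_limit_cong'[where g = w and i = l]) simp_all
  qed
  have u: "continuous_on I u"
  proof (rule continuous_on_if_continuous_on_Int_atMost)
    show "continuous_on (I \<inter> {..b}) u" for b
      by (rule uniform_limit_theorem[OF _ lim]) (auto intro: always_eventually continuous_on_subset[OF w])
  qed
  moreover have "\<Lambda> u t = u t" if t: "t \<in> I" for t
  proof -
    have sub: "{0..t} \<subseteq> I" using time_intervalD[OF I t] by simp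
    have "uniform_limit {0..t} w u sequentially"
      using uniform_limit_on_subset[OF lim[of t]] sub by auto
    then have "(\<lambda>n. \<Lambda> (w n) t) \<longlonglongrightarrow> \<Lambda> u t"
      by (rule history_dependent_tendsto[OF hd t sub w u])
    moreover have "(\<lambda>n. w (Suc n) t) \<longlonglongrightarrow> u t"
      using LIMSEQ_Suc[OF tendsto_uniform_limitI[OF lim[of t]]] t by simp
    ultimately show ?thesis by (simp add: w_def LIMSEQ_unique)
  qed
  ultimately show ?thesis by (rule that)
qed

lemma history_dependent_unique_fixed_point:
  fixes \<Lambda> :: "(real \<Rightarrow> 'a::{real_normed_vector,complete_space}) \<Rightarrow> real \<Rightarrow> 'a"
  assumes I: "time_interval I" and cont: "maps_continuous I \<Lambda>" and hd: "history_dependent I \<Lambda>"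
  shows "\<exists>u. continuous_on I u \<and> (\<forall>t\<in>I. \<Lambda> u t = u t)
           \<and> (\<forall>v. continuous_on I v \<and> (\<forall>t\<in>I. \<Lambda> v t = v t) \<longrightarrow> (\<forall>t\<in>I. v t = u t))"
proof -
  obtain u where u: "continuous_on I u" "\<And>t. t \<in> I \<Longrightarrow> \<Lambda> u t = u t"
    using history_dependent_fixed_point_exists[OF I cont hd] by blast
  show ?thesis
  proof (intro exI[of _ u] conjI allI impI ballI)
    fix v t assume "continuous_on I v \<and> (\<forall>t\<in>I. \<Lambda> v t = v t)" "t \<in> I"
    then show "v t = u t" using history_dependent_fixed_point_unique[OF I hd, of v u t] u by auto
  qed (use u in auto)
qed

lemma maps_continuous_lipschitz_comp:
  assumes R: "maps_continuous I R" and S: "maps_continuous I S" and f: "continuous_on I f"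
    and F: "L-lipschitz_on UNIV F"
  shows "maps_continuous I (\<lambda>w t. F (R w t, f t - S w t))"
  unfolding maps_continuous_def
proof (intro allI impI)
  fix w :: "real \<Rightarrow> 'a" assume "continuous_on I w"
  then have "continuous_on I (\<lambda>t. (R w t, f t - S w t))"
    using R S f unfolding maps_continuous_def by (intro continuous_intros) auto
  then show "continuous_on I (\<lambda>t. F (R w t, f t - S w t))"
    using continuous_on_compose2[OF lipschitz_on_continuous_on[OF F]] by blast
qed

lemma history_dependent_lipschitz_comp:
  fixes R :: "(real \<Rightarrow> 'a::real_normed_vector) \<Rightarrow> real \<Rightarrow> 'b::real_normed_vector"
    and S :: "(real \<Rightarrow> 'a) \<Rightarrow> real \<Rightarrow> 'c::real_normed_vector"
    and F :: "'b \<times> 'c \<Rightarrow> 'd::real_normed_vector"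
  assumes R: "history_dependent I R" and S: "history_dependent I S" and F: "L-lipschitz_on UNIV F"
  shows "history_dependent I (\<lambda>w t. F (R w t, f t - S w t))"
  unfolding history_dependent_def
proof (intro allI impI)
  fix J assume "compact J \<and> J \<subseteq> I"
  then have J: "compact J" "J \<subseteq> I" by auto
  obtain LR where LR: "0 < LR" "\<forall>u1 u2. continuous_on I u1 \<and> continuous_on I u2 \<longrightarrow>
      (\<forall>t\<in>J. norm (R u1 t - R u2 t) \<le> LR * integral {0..t} (\<lambda>s. norm (u1 s - u2 s)))"
    using history_dependentD[OF R J] by blast
  obtain LS where LS: "0 < LS" "\<forall>u1 u2. continuous_on I u1 \<and> continuous_on I u2 \<longrightarrow>
      (\<forall>t\<in>J. norm (S u1 t - S u2 t) \<le> LS * integral {0..t} (\<lambda>s. norm (u1 s - u2 s)))"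
    using history_dependentD[OF S J] by blast
  have L: "0 \<le> L" using F lipschitz_on_nonneg by blast
  show "\<exists>C>0. \<forall>u1 u2. continuous_on I u1 \<and> continuous_on I u2 \<longrightarrow>
      (\<forall>t\<in>J. norm (F (R u1 t, f t - S u1 t) - F (R u2 t, f t - S u2 t))
               \<le> C * integral {0..t} (\<lambda>s. norm (u1 s - u2 s)))"
  proof (intro exI[of _ "(L + 1) * (LR + LS)"] conjI allI impI ballI)
    fix u1 u2 :: "real \<Rightarrow> 'a" and t assume u: "continuous_on I u1 \<and> continuous_on I u2" and t: "t \<in> J"
    define q where "q = integral {0..t} (\<lambda>s. norm (u1 s - u2 s))"
    have r: "norm (R u1 t - R u2 t) \<le> LR * q" and s: "norm (S u1 t - S u2 t) \<le> LS * q"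
      using LR(2)[rule_format, OF u t] LS(2)[rule_format, OF u t] unfolding q_def by auto
    have "0 \<le> LR * q" using norm_ge_zero r by (rule order_trans)
    then have "0 \<le> q" using LR(1) by (simp add: zero_le_mult_iff)
    have "norm (F (R u1 t, f t - S u1 t) - F (R u2 t, f t - S u2 t))
        \<le> L * norm ((R u1 t, f t - S u1 t) - (R u2 t, f t - S u2 t))"
      using lipschitz_onD[OF F, of "(R u1 t, f t - S u1 t)" "(R u2 t, f t - S u2 t)"]
      by (simp add: dist_norm)
    also have "\<dots> \<le> L * (norm (R u1 t - R u2 t) + norm (S u1 t - S u2 t))"
      using L norm_Pair_le[of "R u1 t - R u2 t" "S u2 t - S u1 t"]
      by (intro mult_left_mono) (auto simp: norm_minus_commute)
    also have "\<dots> \<le> (L + 1) * ((LR + LS) * q)"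
      using r s L \<open>0 \<le> q\<close> by (intro mult_mono) (auto simp: algebra_simps)
    finally show "norm (F (R u1 t, f t - S u1 t) - F (R u2 t, f t - S u2 t))
        \<le> (L + 1) * (LR + LS) * q" by simp
  qed (use L LR LS in simp)
qed

theorem corollary3p1:
  fixes A :: "'a::{real_inner,complete_space} \<Rightarrow> 'a"
    and K :: "'a set"
    and j :: "'b::{real_inner,complete_space} \<Rightarrow> 'a \<Rightarrow> real"
    and f :: "real \<Rightarrow> 'a"
    and R :: "(real \<Rightarrow> 'a) \<Rightarrow> (real \<Rightarrow> 'b)"
    and S :: "(real \<Rightarrow> 'a) \<Rightarrow> (real \<Rightarrow> 'a)"
    and I :: "real set" and T m\<^sub>A L\<^sub>A \<alpha>\<^sub>j :: real
  assumes I: "(T > 0 \<and> I = {0..T}) \<or> I = {0..}"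
    and K: "K \<noteq> {}" "closed K" "convex K" "cone K"
    and A_mon: "\<And>u v. (A u - A v) \<bullet> (u - v) \<ge> m\<^sub>A * (norm (u - v))\<^sup>2"
    and A_lip: "\<And>u v. norm (A u - A v) \<le> L\<^sub>A * norm (u - v)"
    and mA: "m\<^sub>A > 0" and LA: "L\<^sub>A > 0"
    and j_convex: "\<And>\<eta>. convex_on K (j \<eta>)"
    and j_hom: "\<And>\<eta> c v. c > 0 \<Longrightarrow> v \<in> K \<Longrightarrow> j \<eta> (c *\<^sub>R v) = c * j \<eta> v"
    and j_lip: "\<And>\<eta>. \<exists>L. L-lipschitz_on K (j \<eta>)"
    and alpha: "\<alpha>\<^sub>j \<ge> 0"
    and j_ineq: "\<And>\<eta>1 \<eta>2 v1 v2. v1 \<in> K \<Longrightarrow> v2 \<in> K \<Longrightarrow>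
        j \<eta>1 v2 - j \<eta>1 v1 + j \<eta>2 v1 - j \<eta>2 v2 \<le> \<alpha>\<^sub>j * norm (\<eta>1 - \<eta>2) * norm (v1 - v2)"
    and f: "continuous_on I f"
    and R: "maps_continuous I R" "history_dependent I R"
    and S: "maps_continuous I S" "history_dependent I S"
  shows "\<exists>u. continuous_on I u
           \<and> (\<forall>t\<in>I. - u t \<in> normal_cone (Cset_t j K f (R u t) t) (A (u t) + S u t))
           \<and> (\<forall>t\<in>I. u t \<in> K)
           \<and> (\<forall>v. continuous_on I v
                  \<and> (\<forall>t\<in>I. - v t \<in> normal_cone (Cset_t j K f (R v t) t) (A (v t) + S v t))
                  \<longrightarrow> (\<forall>t\<in>I. v t = u t))"
proof -
  interpret strongly_monotone_vi A K j m\<^sub>A L\<^sub>A \<alpha>\<^sub>j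
    by unfold_locales (fact K A_mon A_lip mA LA j_convex j_hom j_lip alpha j_ineq)+
  define \<Lambda> where "\<Lambda> w t = (\<lambda>(\<eta>, g). vi_sol \<eta> g) (R w t, f t - S w t)" for w t
  have solves_iff: "- v t \<in> normal_cone (Cset_t j K f (R v t) t) (A (v t) + S v t) \<longleftrightarrow> \<Lambda> v t = v t"
    for v t
    unfolding neg_mem_normal_cone_Cset_t_iff \<Lambda>_def solves_vi_iff_vi_sol by simp
  have "time_interval I" using I by (auto simp: time_interval_def)
  moreover have "maps_continuous I \<Lambda>"
    unfolding \<Lambda>_def by (rule maps_continuous_lipschitz_comp[OF R(1) S(1) f lipschitz_vi_sol])
  moreover have "history_dependent I \<Lambda>"
    unfolding \<Lambda>_def by (rule history_dependent_lipschitz_comp[OF R(2) S(2) lipschitz_vi_sol])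
  ultimately have "\<exists>u. continuous_on I u \<and> (\<forall>t\<in>I. \<Lambda> u t = u t)
      \<and> (\<forall>v. continuous_on I v \<and> (\<forall>t\<in>I. \<Lambda> v t = v t) \<longrightarrow> (\<forall>t\<in>I. v t = u t))"
    by (rule history_dependent_unique_fixed_point)
  then obtain u where u: "continuous_on I u" "\<forall>t\<in>I. \<Lambda> u t = u t"
    and unique: "\<forall>v. continuous_on I v \<and> (\<forall>t\<in>I. \<Lambda> v t = v t) \<longrightarrow> (\<forall>t\<in>I. v t = u t)"
    by (elim exE conjE)
  moreover have "\<forall>t\<in>I. u t \<in> K"
  proof
    fix t assume "t \<in> I"
    then show "u t \<in> K"
      using solves_vi_vi_sol[of "R u t" "f t - S u t"] u(2) by (simp add: \<Lambda>_def solves_vi_def)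
  qed
  ultimately show ?thesis unfolding solves_iff by (intro exI[of _ u] conjI)
qed

end
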